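(* Let $0\le t_d\le t_f$ be integers, let $\mathcal{C}$ be an $[n,k,\ge 2t_d+1]$ linear code over $\mathbb{F}_q$ with generator matrix $G$ and $c_u=uG$, let $f:\mathbb{F}_q^k\to\mathrm{Im}(f)$, and let $u_1,\dots,u_M\in\mathbb{F}_q^k$. Then $$N\big(\mathcal{D}_{\mathcal{C},f}(t_f:u_1,\dots,u_M)\big)\le N(M,2(t_f-t_d)).$$
   Context: $d(\cdot,\cdot)$ is Hamming distance. $\mathcal{D}_{\mathcal{C},f}(t_f:u_1,\dots,u_M)$ is the $M\times M$ matrix with $(i,j)$ entry $\max(2t_f+1-d(c_{u_i},c_{u_j}),0)$ if $f(u_i)\ne f(u_j)$ and $0$ otherwise. For a nonnegative integer $M\times M$ matrix $\mathcal{D}$, $N(\mathcal{D})$ is the least $r$ such that there are $p_1,\dots,p_M\in\mathbb{F}_q^r$ (not necessarily distinct) with $d(p_i,p_j)\ge[\mathcal{D}]_{i,j}$ for all $i,j$. $N(M,D)$ denotes $N(\mathcal{D})$ for the matrix with all off-diagonal entries equal to $D$ and zero diagonal. *)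

theory Defs
  imports Main
begin

definition vecs :: "nat \<Rightarrow> 'a list set" where
  "vecs r = {x. length x = r}"

definition hamming :: "'a list \<Rightarrow> 'a list \<Rightarrow> nat" where
  "hamming x y = card {i. i < length x \<and> i < length y \<and> x ! i \<noteq> y ! i}"

definition encode :: "nat \<Rightarrow> nat \<Rightarrow> (nat \<Rightarrow> nat \<Rightarrow> 'a::comm_ring_1) \<Rightarrow> 'a list \<Rightarrow> 'a list" where
  "encode k n G u = map (\<lambda>j. \<Sum>i<k. u ! i * G i j) [0..<n]"

definition code :: "nat \<Rightarrow> nat \<Rightarrow> (nat \<Rightarrow> nat \<Rightarrow> 'a::comm_ring_1) \<Rightarrow> 'a list set" where
  "code k n G = encode k n G ` vecs k"

definition rows_lin_indep :: "nat \<Rightarrow> nat \<Rightarrow> (nat \<Rightarrow> nat \<Rightarrow> 'a::comm_ring_1) \<Rightarrow> bool" where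
  "rows_lin_indep k n G \<longleftrightarrow>
     (\<forall>u \<in> vecs k. encode k n G u = replicate n 0 \<longrightarrow> u = replicate k 0)"

definition min_dist_ge :: "'a list set \<Rightarrow> nat \<Rightarrow> bool" where
  "min_dist_ge C d \<longleftrightarrow> (\<forall>c\<in>C. \<forall>c'\<in>C. c \<noteq> c' \<longrightarrow> d \<le> hamming c c')"

text \<open>The function-correcting distance matrix D_{C,f}(t_f : u_1..u_M), indices 0..M-1.
  Truncated nat subtraction gives max(2t_f+1-d, 0).\<close>
definition Dmat :: "nat \<Rightarrow> nat \<Rightarrow> (nat \<Rightarrow> nat \<Rightarrow> 'a::comm_ring_1) \<Rightarrow> ('a list \<Rightarrow> 'b)
    \<Rightarrow> nat \<Rightarrow> (nat \<Rightarrow> 'a list) \<Rightarrow> nat \<Rightarrow> nat \<Rightarrow> nat" where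
  "Dmat k n G f tf u i j =
     (if f (u i) \<noteq> f (u j) then (2 * tf + 1) - hamming (encode k n G (u i)) (encode k n G (u j)) else 0)"

definition Nmat :: "'a itself \<Rightarrow> nat \<Rightarrow> (nat \<Rightarrow> nat \<Rightarrow> nat) \<Rightarrow> nat" where
  "Nmat _ M D = (LEAST r. \<exists>p :: nat \<Rightarrow> 'a list.
      (\<forall>i<M. p i \<in> vecs r) \<and> (\<forall>i<M. \<forall>j<M. D i j \<le> hamming (p i) (p j)))"

definition Nunif :: "'a itself \<Rightarrow> nat \<Rightarrow> nat \<Rightarrow> nat" where
  "Nunif T M d = Nmat T M (\<lambda>i j. if i = j then 0 else d)"

end

theory Submission
  imports Defs
begin

text \<open>Distinct messages have distinct codewords, since the rows of the generator matrix
  are independent, and distinct codewords are at distance at least \<open>2 t\<^sub>d + 1\<close>. Hence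
  every entry of \<open>\<D>\<^sub>\<C>\<^sub>,\<^sub>f\<close> is at most the corresponding entry of the uniform matrix with
  off-diagonal entries \<open>2 (t\<^sub>f - t\<^sub>d)\<close>. A point configuration realising a matrix also
  realises every entrywise smaller one, so \<open>N\<close> is monotone; the uniform matrix is realisable
  at all by indicator vectors of disjoint blocks, so its \<open>N\<close> is attained.\<close>

definition dist_realization :: "nat \<Rightarrow> nat \<Rightarrow> (nat \<Rightarrow> nat \<Rightarrow> nat) \<Rightarrow> (nat \<Rightarrow> 'a list) \<Rightarrow> bool" where
  "dist_realization r M D p \<longleftrightarrow>
     (\<forall>i<M. p i \<in> vecs r) \<and> (\<forall>i<M. \<forall>j<M. D i j \<le> hamming (p i) (p j))"

lemma Nmat_eq_Least_realization:
  "Nmat TYPE('a) M D = (LEAST r. \<exists>p :: nat \<Rightarrow> 'a list. dist_realization r M D p)"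
  unfolding Nmat_def dist_realization_def ..

lemma Nmat_le_realization:
  assumes "dist_realization r M D (p :: nat \<Rightarrow> 'a list)"
  shows "Nmat TYPE('a) M D \<le> r"
  unfolding Nmat_eq_Least_realization by (rule Least_le) (use assms in blast)

lemma Nmat_realization:
  assumes "dist_realization r M D (p :: nat \<Rightarrow> 'a list)"
  obtains q :: "nat \<Rightarrow> 'a list" where "dist_realization (Nmat TYPE('a) M D) M D q"
proof -
  have "\<exists>q :: nat \<Rightarrow> 'a list.
      dist_realization (LEAST r. \<exists>q :: nat \<Rightarrow> 'a list. dist_realization r M D q) M D q"
    by (rule LeastI_ex) (use assms in blast)
  then show thesis
    using that unfolding Nmat_eq_Least_realization by blast
qed

lemma dist_realization_mono:
  assumes "dist_realization r M D' p" and "\<forall>i<M. \<forall>j<M. D i j \<le> D' i j"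
  shows "dist_realization r M D p"
  using assms unfolding dist_realization_def by (meson order_trans)

lemma Nmat_mono:
  assumes "\<forall>i<M. \<forall>j<M. D i j \<le> D' i j"
    and "dist_realization r M D' (p :: nat \<Rightarrow> 'a list)"
  shows "Nmat TYPE('a) M D \<le> Nmat TYPE('a) M D'"
proof -
  obtain q :: "nat \<Rightarrow> 'a list" where "dist_realization (Nmat TYPE('a) M D') M D' q"
    using Nmat_realization[OF assms(2)] .
  then have "dist_realization (Nmat TYPE('a) M D') M D q"
    using assms(1) by (rule dist_realization_mono)
  then show ?thesis
    by (rule Nmat_le_realization)
qed

lemma uniform_dist_realization:
  "\<exists>p :: nat \<Rightarrow> 'a::zero_neq_one list.
     dist_realization (M * d) M (\<lambda>i j. if i = j then 0 else d) p"
proof -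
  define p :: "nat \<Rightarrow> 'a list" where
    "p i = map (\<lambda>l. if l div d = i then 1 else 0) [0..<M * d]" for i
  have "d \<le> hamming (p i) (p j)" if "i < M" "j < M" "i \<noteq> j" for i j
  proof -
    have "{i * d..<i * d + d} \<subseteq> {l. l < length (p i) \<and> l < length (p j) \<and> p i ! l \<noteq> p j ! l}"
    proof
      fix l assume l: "l \<in> {i * d..<i * d + d}"
      then have "l div d = i"
        by (simp add: div_nat_eqI mult.commute)
      moreover have "i * d + d \<le> M * d"
        using \<open>i < M\<close> mult_le_mono1[of "Suc i" M d] by simp
      ultimately show "l \<in> {l. l < length (p i) \<and> l < length (p j) \<and> p i ! l \<noteq> p j ! l}"
        using l \<open>i \<noteq> j\<close> by (auto simp: p_def)
    qed
    then have "card {i * d..<i * d + d} \<le> hamming (p i) (p j)"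
      unfolding hamming_def by (rule card_mono[rotated]) simp
    then show ?thesis by simp
  qed
  then have "dist_realization (M * d) M (\<lambda>i j. if i = j then 0 else d) p"
    by (simp add: dist_realization_def p_def vecs_def)
  then show ?thesis by blast
qed

lemma length_encode [simp]: "length (encode k n G u) = n"
  by (simp add: encode_def)

lemma encode_diff:
  fixes G :: "nat \<Rightarrow> nat \<Rightarrow> 'a::comm_ring_1"
  assumes "length x = k" and "length y = k"
  shows "encode k n G (map2 (-) x y) = map2 (-) (encode k n G x) (encode k n G y)"
  using assms by (auto simp: encode_def sum_subtractf left_diff_distrib intro!: nth_equalityI)

lemma map2_minus_eq_replicate_0_iff:
  fixes x y :: "'a::ab_group_add list"
  assumes "length x = length y"
  shows "map2 (-) x y = replicate (length x) 0 \<longleftrightarrow> x = y"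
  using assms by (induction x y rule: list_induct2) auto

lemma encode_inj_on:
  fixes G :: "nat \<Rightarrow> nat \<Rightarrow> 'a::comm_ring_1"
  assumes "rows_lin_indep k n G"
  shows "inj_on (encode k n G) (vecs k)"
proof
  fix x y assume "x \<in> vecs k" and "y \<in> vecs k"
    and eq: "encode k n G x = encode k n G y"
  then have lens: "length x = k" "length y = k" by (auto simp: vecs_def)
  have "encode k n G (map2 (-) x y) = map2 (-) (encode k n G y) (encode k n G y)"
    by (simp only: encode_diff[OF lens] eq)
  also have "\<dots> = replicate n 0"
    using map2_minus_eq_replicate_0_iff[of "encode k n G y" "encode k n G y"] by simp
  finally have "map2 (-) x y = replicate k 0"
    using assms lens by (simp add: rows_lin_indep_def vecs_def)
  then show "x = y"
    using map2_minus_eq_replicate_0_iff[of x y] lens by metis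
qed

text \<open>By truncated subtraction the bound holds without \<open>t\<^sub>d \<le> t\<^sub>f\<close>, so the theorem does not
  use that hypothesis.\<close>

lemma Dmat_le_uniform:
  fixes G :: "nat \<Rightarrow> nat \<Rightarrow> 'a::comm_ring_1"
  assumes "rows_lin_indep k n G" and "min_dist_ge (code k n G) (2 * td + 1)"
    and "u i \<in> vecs k" and "u j \<in> vecs k"
  shows "Dmat k n G f tf u i j \<le> (if i = j then 0 else 2 * (tf - td))"
proof (cases "f (u i) = f (u j)")
  case False
  then have "encode k n G (u i) \<noteq> encode k n G (u j)"
    using assms(3,4) by (auto dest: inj_onD[OF encode_inj_on[OF assms(1)]])
  moreover have "encode k n G (u i) \<in> code k n G" and "encode k n G (u j) \<in> code k n G"
    using assms(3,4) by (auto simp: code_def)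
  ultimately have "2 * td + 1 \<le> hamming (encode k n G (u i)) (encode k n G (u j))"
    using assms(2) by (auto simp: min_dist_ge_def)
  then show ?thesis
    using False by (auto simp: Dmat_def)
qed (simp add: Dmat_def)

theorem mainTheorem5:
  fixes G :: "nat \<Rightarrow> nat \<Rightarrow> 'a::{field,finite}"
    and f :: "'a list \<Rightarrow> 'b"
    and u :: "nat \<Rightarrow> 'a list"
    and n k td tf M :: nat
  assumes "td \<le> tf"
    and "rows_lin_indep k n G"
    and "min_dist_ge (code k n G) (2 * td + 1)"
    and "\<forall>i<M. u i \<in> vecs k"
  shows "Nmat TYPE('a) M (Dmat k n G f tf u) \<le> Nunif TYPE('a) M (2 * (tf - td))"
proof -
  let ?U = "\<lambda>i j. if i = j then 0 else 2 * (tf - td)"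
  obtain p :: "nat \<Rightarrow> 'a list" where "dist_realization (M * (2 * (tf - td))) M ?U p"
    using uniform_dist_realization by blast
  moreover have "\<forall>i<M. \<forall>j<M. Dmat k n G f tf u i j \<le> ?U i j"
    using Dmat_le_uniform[OF assms(2,3)] assms(4) by blast
  ultimately show ?thesis
    unfolding Nunif_def by (intro Nmat_mono)
qed

end
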